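(* Let $\alpha\ge1$ and $2\le m\le k<n$. Suppose a single-pass streaming algorithm $\mathcal{A}$ with memory $m$ satisfies condition (SR). Then for every $i\in[k]$ and all sufficiently large $T$, $$\Pr_{\nu_i}[\tau_i]\le\frac12\cdot\frac{k-m+1}{k}.$$
   Context: Streaming stochastic multi-armed bandit: $n$ arms arrive one by one in a stream; arm $i$ has Bernoulli rewards with mean $\mu_i$. At most $m$ arms can be stored in memory; in each of $T$ rounds the player may discard stored arms and read next arms from the stream, then pulls exactly one stored arm $A_t$; discarded or passed-over arms cannot be pulled again. Regret $\mathbb{E}_\nu[R(T)]=\mathbb{E}_\nu[\sum_{t=1}^T(\mu_*-\mu_{A_t})]$ with $\mu_*$ the largest mean of $\nu$. Hard instances: $\varepsilon=\frac14\left(\frac{k}{T}\right)^{\frac{1}{2+2\alpha}}$, arms arriving in order $1,\dots,n$. $\nu_1$: arm 1 mean $\frac12+n\varepsilon$, arms $2,\dots,k$ mean $\frac12+(n-1)\varepsilon$, arms $k+1,\dots,n$ mean $\frac12$. For $2\le i\le k$, $\nu_i$ equals $\nu_1$ except arm $i$ has mean $\frac12+(n+1)\varepsilon$. $\mathcal{I}=\{\nu_1,\dots,\nu_k\}$. $\nu_i'$ equals $\nu_i$ except arms $k+1,\dots,n$ have mean $1$; $\mathcal{I}'=\{\nu_1',\dots,\nu_k'\}$. $f(k,m)=\frac{2}{16^{\alpha+1}}\cdot\frac{k-m+1}{k^{\frac{1}{\alpha+1}}}$. Condition (SR): for every $\nu\in\mathcal{I}$, $\mathbb{E}_\nu[R(T)]\le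 f(k,m)T^{\frac{1}{\alpha+1}}\varepsilon^{1-2\alpha}$, and for every $\nu'\in\mathcal{I}'$, $\mathbb{E}_{\nu'}[R(T)]\le\frac1{32}f(k,m)T^{\frac{1}{\alpha+1}}$. Stage one consists of the rounds before the $(k+1)$-th arm of the stream is read; stage two consists of the round in which it is read and all later rounds. $\tau_i$ is the event that arm $i$ is not in memory at the beginning of stage two. *)

theory Defs
  imports "HOL-Probability.Probability"
begin

text \<open>Arms are the natural numbers 1..n, arriving in the stream in the order 1,2,...,n.
  A memory state is a pair (M, r): M is the set of stored arms, r is the number of
  arms read from the stream so far (so arms 1..r have been read; the next arm is r+1).
  Within a round the player performs a finite sequence of primitive operations
  (discard a stored arm / read the next arm of the stream into memory) and then
  pulls one stored arm.\<close>

datatype stream_op = Discard nat | Read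

type_synonym mem_state = "nat set \<times> nat"

definition init_state :: mem_state where
  "init_state = ({}, 0)"

fun step_op :: "nat \<Rightarrow> nat \<Rightarrow> mem_state \<Rightarrow> stream_op \<Rightarrow> mem_state option" where
  "step_op m n (M, r) Read =
     (if r < n \<and> card M < m then Some (insert (Suc r) M, Suc r) else None)"
| "step_op m n (M, r) (Discard i) =
     (if i \<in> M then Some (M - {i}, r) else None)"

fun apply_ops :: "nat \<Rightarrow> nat \<Rightarrow> mem_state \<Rightarrow> stream_op list \<Rightarrow> mem_state option" where
  "apply_ops m n s [] = Some s"
| "apply_ops m n s (op1 # os) =
     (case step_op m n s op1 of None \<Rightarrow> None | Some s' \<Rightarrow> apply_ops m n s' os)"

text \<open>One round: (operations, pulled arm, observed Bernoulli reward).\<close>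
type_synonym round_rec = "stream_op list \<times> nat \<times> bool"
type_synonym history = "round_rec list"

definition round_step :: "nat \<Rightarrow> nat \<Rightarrow> mem_state \<Rightarrow> stream_op list \<times> nat \<Rightarrow> mem_state option" where
  "round_step m n s act =
     (case apply_ops m n s (fst act) of
        None \<Rightarrow> None
      | Some s' \<Rightarrow> (if snd act \<in> fst s' then Some s' else None))"

fun hist_state_from :: "nat \<Rightarrow> nat \<Rightarrow> mem_state \<Rightarrow> history \<Rightarrow> mem_state option" where
  "hist_state_from m n s [] = Some s"
| "hist_state_from m n s ((ops, a, _) # h) =
     (case round_step m n s (ops, a) of None \<Rightarrow> None | Some s' \<Rightarrow> hist_state_from m n s' h)"

definition hist_state :: "nat \<Rightarrow> nat \<Rightarrow> history \<Rightarrow> mem_state option" where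
  "hist_state m n h = hist_state_from m n init_state h"

text \<open>A (possibly randomized) single-pass streaming algorithm: given the history so far,
  it chooses (randomly) the operations of the current round and the arm to pull.\<close>
type_synonym policy = "history \<Rightarrow> (stream_op list \<times> nat) pmf"

definition valid_alg :: "nat \<Rightarrow> nat \<Rightarrow> policy \<Rightarrow> bool" where
  "valid_alg m n \<pi> \<longleftrightarrow>
     (\<forall>h s. hist_state m n h = Some s \<longrightarrow>
        (\<forall>act \<in> set_pmf (\<pi> h). round_step m n s act \<noteq> None))"

fun run :: "policy \<Rightarrow> (nat \<Rightarrow> real) \<Rightarrow> nat \<Rightarrow> history pmf" where
  "run \<pi> mu 0 = return_pmf []"
| "run \<pi> mu (Suc t) =
     bind_pmf (run \<pi> mu t) (\<lambda>h.
       bind_pmf (\<pi> h) (\<lambda>act.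
         bind_pmf (bernoulli_pmf (mu (snd act))) (\<lambda>b.
           return_pmf (h @ [(fst act, snd act, b)]))))"

definition best_mean :: "nat \<Rightarrow> (nat \<Rightarrow> real) \<Rightarrow> real" where
  "best_mean n mu = Max (mu ` {1..n})"

definition exp_regret :: "policy \<Rightarrow> nat \<Rightarrow> (nat \<Rightarrow> real) \<Rightarrow> nat \<Rightarrow> real" where
  "exp_regret \<pi> n mu T =
     measure_pmf.expectation (run \<pi> mu T)
       (\<lambda>h. \<Sum>x\<leftarrow>h. best_mean n mu - mu (fst (snd x)))"

definition eps :: "real \<Rightarrow> nat \<Rightarrow> nat \<Rightarrow> real" where
  "eps \<alpha> k T = 1/4 * (real k / real T) powr (1 / (2 + 2 * \<alpha>))"

text \<open>nu_inst: the instance nu_i (i = 1 gives nu_1). Only arms 1..n are relevant.\<close>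
definition nu_inst :: "real \<Rightarrow> nat \<Rightarrow> nat \<Rightarrow> nat \<Rightarrow> nat \<Rightarrow> nat \<Rightarrow> real" where
  "nu_inst \<alpha> k n T i j =
     (if 2 \<le> i \<and> j = i then 1/2 + real (n + 1) * eps \<alpha> k T
      else if j = 1 then 1/2 + real n * eps \<alpha> k T
      else if 2 \<le> j \<and> j \<le> k then 1/2 + (real n - 1) * eps \<alpha> k T
      else 1/2)"

definition nu_inst' :: "real \<Rightarrow> nat \<Rightarrow> nat \<Rightarrow> nat \<Rightarrow> nat \<Rightarrow> nat \<Rightarrow> real" where
  "nu_inst' \<alpha> k n T i j =
     (if k + 1 \<le> j \<and> j \<le> n then 1 else nu_inst \<alpha> k n T i j)"

definition f_km :: "real \<Rightarrow> nat \<Rightarrow> nat \<Rightarrow> real" where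
  "f_km \<alpha> k m = 2 / 16 powr (\<alpha> + 1) * (real k - real m + 1) / real k powr (1 / (\<alpha> + 1))"

definition SR :: "real \<Rightarrow> nat \<Rightarrow> nat \<Rightarrow> nat \<Rightarrow> nat \<Rightarrow> policy \<Rightarrow> bool" where
  "SR \<alpha> m k n T \<pi> \<longleftrightarrow>
     (\<forall>i\<in>{1..k}. exp_regret \<pi> n (nu_inst \<alpha> k n T i) T
         \<le> f_km \<alpha> k m * real T powr (1 / (\<alpha> + 1)) * eps \<alpha> k T powr (1 - 2 * \<alpha>)) \<and>
     (\<forall>i\<in>{1..k}. exp_regret \<pi> n (nu_inst' \<alpha> k n T i) T
         \<le> 1/32 * f_km \<alpha> k m * real T powr (1 / (\<alpha> + 1)))"

fun op_trace :: "nat \<Rightarrow> nat \<Rightarrow> mem_state \<Rightarrow> stream_op list \<Rightarrow> mem_state list" where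
  "op_trace m n s [] = [s]"
| "op_trace m n s (op1 # os) =
     s # (case step_op m n s op1 of None \<Rightarrow> [] | Some s' \<Rightarrow> op_trace m n s' os)"

text \<open>Memory at the beginning of stage two: the memory immediately before arm k+1 is read,
  i.e. the last state in the trace with at most k arms read. If arm k+1 is never read
  within the horizon, this is the memory at the end of the last round.\<close>
definition stage2_mem :: "nat \<Rightarrow> nat \<Rightarrow> nat \<Rightarrow> history \<Rightarrow> nat set" where
  "stage2_mem m n k h =
     fst (last (filter (\<lambda>s. snd s \<le> k) (op_trace m n init_state (concat (map fst h)))))"

definition tau_event :: "nat \<Rightarrow> nat \<Rightarrow> nat \<Rightarrow> nat \<Rightarrow> history set" where
  "tau_event m n k i = {h. i \<notin> stage2_mem m n k h}"

end

theory Submission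
  imports Defs
begin

text \<open>Let \<open>L\<close> be the number of rounds of stage one. Under \<open>\<nu>\<^sub>i\<close>, on the event \<open>\<tau>\<^sub>i\<close> arm \<open>i\<close>
  is gone for good at the start of stage two, so each of the remaining \<open>T - L\<close> rounds pulls a
  suboptimal arm and costs at least \<open>\<epsilon>\<close>: the regret is at least \<open>\<epsilon> (T Pr[\<tau>\<^sub>i] - E[L])\<close>.
  Under \<open>\<nu>'\<^sub>i\<close> every stage-one round pulls one of the arms \<open>1..k\<close>, each at least \<open>1/4\<close> worse
  than the arms of mean \<open>1\<close>, so the regret is at least \<open>E'[L]/4\<close>. Since \<open>\<nu>\<^sub>i\<close> and \<open>\<nu>'\<^sub>i\<close> agree
  on the arms seen in stage one, \<open>L\<close> has the same law under both, and the two regret bounds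
  of (SR) combine to \<open>Pr[\<tau>\<^sub>i] \<le> 1/8 \<cdot> (k-m+1)/k + 1/64 \<cdot> (k-m+1)/k\<close> once \<open>\<epsilon>\<close> is small.\<close>

section \<open>Memory states and operation traces\<close>

definition mem_wf :: "nat \<Rightarrow> mem_state \<Rightarrow> bool" where
  "mem_wf n s \<longleftrightarrow> fst s \<subseteq> {1..snd s} \<and> snd s \<le> n"

lemma mem_wf_init_state: "mem_wf n init_state"
  by (simp add: mem_wf_def init_state_def)

lemma step_op_Some:
  assumes "step_op m n s op1 = Some s'"
  shows "(s' = (insert (Suc (snd s)) (fst s), Suc (snd s)) \<and> snd s < n)
       \<or> (\<exists>j. s' = (fst s - {j}, snd s))"
  using assms by (cases s; cases op1) (auto split: if_splits)

lemma step_op_mem_wf: "step_op m n s op1 = Some s' \<Longrightarrow> mem_wf n s \<Longrightarrow> mem_wf n s'"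
  by (drule step_op_Some) (auto simp: mem_wf_def)

lemma apply_ops_mem_wf: "apply_ops m n s ops = Some s' \<Longrightarrow> mem_wf n s \<Longrightarrow> mem_wf n s'"
  by (induction ops arbitrary: s) (auto simp: step_op_mem_wf split: option.splits)

lemma op_trace_not_Nil: "op_trace m n s ops \<noteq> []"
  by (induction ops arbitrary: s) auto

lemma hd_op_trace: "hd (op_trace m n s ops) = s"
  by (cases ops) auto

lemma in_op_trace: "s \<in> set (op_trace m n s ops)"
  by (metis hd_op_trace list.set_sel(1) op_trace_not_Nil)

lemma op_trace_append:
  "apply_ops m n s ops = Some s' \<Longrightarrow>
   op_trace m n s (ops @ ops') = butlast (op_trace m n s ops) @ op_trace m n s' ops'"
  by (induction ops arbitrary: s) (auto simp: op_trace_not_Nil split: option.splits)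

lemma op_trace_reads_mono: "q \<in> set (op_trace m n s ops) \<Longrightarrow> snd s \<le> snd q"
proof (induction ops arbitrary: s)
  case (Cons op1 ops)
  then show ?case
    by (cases "step_op m n s op1") (fastforce dest: step_op_Some)+
qed simp

lemma op_trace_mem_wf: "q \<in> set (op_trace m n s ops) \<Longrightarrow> mem_wf n s \<Longrightarrow> mem_wf n q"
proof (induction ops arbitrary: s)
  case (Cons op1 ops)
  then show ?case
    by (cases "step_op m n s op1") (auto dest: step_op_mem_wf)
qed simp

lemma op_trace_read_arm_stays_out:
  "i \<notin> fst s \<Longrightarrow> i \<le> snd s \<Longrightarrow> q \<in> set (op_trace m n s ops) \<Longrightarrow> i \<notin> fst q"
proof (induction ops arbitrary: s)
  case (Cons op1 ops)
  show ?case
  proof (cases "step_op m n s op1")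
    case (Some s1)
    then have "i \<notin> fst s1" "i \<le> snd s1" using step_op_Some[OF Some] Cons.prems by auto
    moreover have "q = s \<or> q \<in> set (op_trace m n s1 ops)" using Cons.prems(3) Some by auto
    ultimately show ?thesis using Cons.IH Cons.prems(1) by blast
  qed (use Cons in simp)
qed simp

lemma op_trace_stage_two_mem:
  assumes "snd s \<le> k" "i \<le> k" "q \<in> set (op_trace m n s ops)" "k < snd q"
    and "i \<notin> fst (last (filter (\<lambda>s. snd s \<le> k) (op_trace m n s ops)))"
  shows "i \<notin> fst q"
  using assms
proof (induction ops arbitrary: s)
  case (Cons op1 ops)
  show ?case
  proof (cases "step_op m n s op1")
    case (Some s1)
    have q: "q \<in> set (op_trace m n s1 ops)" using Cons.prems Some by auto
    show ?thesis
    proof (cases "snd s1 \<le> k")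
      case True
      then have "filter (\<lambda>s. snd s \<le> k) (op_trace m n s1 ops) \<noteq> []"
        using in_op_trace[of s1 m n ops] by (auto simp: filter_empty_conv)
      then show ?thesis using Cons.IH[OF True Cons.prems(2) q Cons.prems(4)] Cons.prems Some by simp
    next
      case False
      then have "filter (\<lambda>s. snd s \<le> k) (op_trace m n s1 ops) = []"
        using op_trace_reads_mono[of _ m n s1 ops] by (fastforce simp: filter_empty_conv)
      then have "i \<notin> fst s" using Cons.prems Some by simp
      moreover have "s1 = (insert (Suc (snd s)) (fst s), Suc (snd s))"
        using step_op_Some[OF Some] False Cons.prems(1) by auto
      ultimately show ?thesis
        using op_trace_read_arm_stays_out[OF _ _ q] Cons.prems(1,2) False by auto
    qed
  qed (use Cons in simp)
qed simp

lemma round_step_eq_Some: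
  "round_step m n s (ops, a) = Some s' \<longleftrightarrow> apply_ops m n s ops = Some s' \<and> a \<in> fst s'"
  by (auto simp: round_step_def split: option.splits)

lemma hist_state_from_Cons_SomeE:
  assumes "hist_state_from m n s ((ops, a, b) # h) = Some e"
  obtains s' where "apply_ops m n s ops = Some s'" "a \<in> fst s'" "hist_state_from m n s' h = Some e"
  using assms by (cases "round_step m n s (ops, a)") (auto simp: round_step_eq_Some)

lemma hist_state_from_snoc:
  "hist_state_from m n s (h @ [(ops, a, b)]) =
   (case hist_state_from m n s h of None \<Rightarrow> None | Some e \<Rightarrow> round_step m n e (ops, a))"
proof (induction h arbitrary: s)
  case (Cons x h)
  then show ?case by (cases x) (simp split: option.splits)
qed (simp split: option.splits)

lemma hist_state_from_mem_wf:
  "hist_state_from m n s h = Some e \<Longrightarrow> mem_wf n s \<Longrightarrow> mem_wf n e"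
proof (induction h arbitrary: s)
  case (Cons x h)
  then show ?case
    by (cases x) (metis hist_state_from_Cons_SomeE apply_ops_mem_wf)
qed simp

lemma pulled_arm_in_op_trace:
  "hist_state_from m n s h = Some e \<Longrightarrow> x \<in> set h \<Longrightarrow>
   \<exists>q\<in>set (op_trace m n s (concat (map fst h))). fst (snd x) \<in> fst q"
proof (induction h arbitrary: s)
  case (Cons y h)
  obtain ops a b where y: "y = (ops, a, b)" by (cases y)
  obtain s' where s': "apply_ops m n s ops = Some s'" "a \<in> fst s'"
    and h: "hist_state_from m n s' h = Some e"
    using Cons.prems(1) unfolding y by (rule hist_state_from_Cons_SomeE)
  have trace: "op_trace m n s (concat (map fst (y # h))) =
      butlast (op_trace m n s ops) @ op_trace m n s' (concat (map fst h))"
    using op_trace_append[OF s'(1)] by (simp add: y)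
  show ?case
  proof (cases "x = y")
    case True
    then show ?thesis using trace s'(2) in_op_trace[of s' m n] by (auto simp: y)
  next
    case False
    then show ?thesis using Cons.IH[OF h] Cons.prems(2) trace by auto
  qed
qed simp

lemma pulled_arm_range:
  assumes "hist_state_from m n s h = Some e" "mem_wf n s" "x \<in> set h"
  shows "fst (snd x) \<in> {1..n}"
proof -
  obtain q where q: "q \<in> set (op_trace m n s (concat (map fst h)))" "fst (snd x) \<in> fst q"
    using pulled_arm_in_op_trace[OF assms(1,3)] by blast
  have "mem_wf n q" using op_trace_mem_wf[OF q(1) assms(2)] .
  then show ?thesis using q(2) by (auto simp: mem_wf_def)
qed

section \<open>Stage one\<close>

lemma sum_list_ge_length_mult:
  fixes f :: "'a \<Rightarrow> real"
  assumes "\<And>x. x \<in> set xs \<Longrightarrow> c \<le> f x"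
  shows "c * real (length xs) \<le> (\<Sum>x\<leftarrow>xs. f x)"
  using sum_list_mono[of xs "\<lambda>_. c" f, OF assms] by (simp add: sum_list_triv mult.commute)

lemma sum_list_take_drop:
  "(\<Sum>x\<leftarrow>xs. f x) = (\<Sum>x\<leftarrow>take l xs. f x) + (\<Sum>x\<leftarrow>drop l xs. f x)"
  by (metis append_take_drop_id map_append sum_list_append)

text \<open>The round in which arm \<open>k + 1\<close> is read already belongs to stage two.\<close>

fun stage_one_rounds :: "nat \<Rightarrow> nat \<Rightarrow> nat \<Rightarrow> mem_state \<Rightarrow> history \<Rightarrow> nat" where
  "stage_one_rounds m n k s [] = 0"
| "stage_one_rounds m n k s ((ops, a, b) # h) =
     (case round_step m n s (ops, a) of
        None \<Rightarrow> 0
      | Some s' \<Rightarrow> if snd s' \<le> k then Suc (stage_one_rounds m n k s' h) else 0)"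

lemma stage_one_rounds_le: "stage_one_rounds m n k s h \<le> length h"
  by (induction m n k s h rule: stage_one_rounds.induct) (auto split: option.splits)

lemma stage_one_rounds_snoc:
  assumes "hist_state_from m n s h = Some e"
  shows "stage_one_rounds m n k s (h @ [(ops, a, b)]) =
     (if stage_one_rounds m n k s h = length h then
        (case round_step m n e (ops, a) of
           None \<Rightarrow> length h
         | Some s' \<Rightarrow> if snd s' \<le> k then Suc (length h) else length h)
      else stage_one_rounds m n k s h)"
  using assms
proof (induction h arbitrary: s)
  case (Cons x h)
  obtain ops' a' b' where x: "x = (ops', a', b')" by (cases x)
  obtain s' where "apply_ops m n s ops' = Some s'" "a' \<in> fst s'"
    and h: "hist_state_from m n s' h = Some e"
    using Cons.prems unfolding x by (rule hist_state_from_Cons_SomeE)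
  then have "round_step m n s (ops', a') = Some s'" by (simp add: round_step_eq_Some)
  then show ?case
    using Cons.IH[OF h] stage_one_rounds_le[of m n k s' h] by (auto simp: x split: option.splits)
qed (simp split: option.splits)

lemma stage_one_pulls:
  assumes "hist_state_from m n s h = Some e" "mem_wf n s"
    and "x \<in> set (take (stage_one_rounds m n k s h) h)"
  shows "fst (snd x) \<in> {1..k}"
  using assms
proof (induction h arbitrary: s)
  case (Cons y h)
  obtain ops a b where y: "y = (ops, a, b)" by (cases y)
  obtain s' where s': "apply_ops m n s ops = Some s'" "a \<in> fst s'"
    and h: "hist_state_from m n s' h = Some e"
    using Cons.prems(1) unfolding y by (rule hist_state_from_Cons_SomeE)
  have wf: "mem_wf n s'" using apply_ops_mem_wf[OF s'(1) Cons.prems(2)] .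
  have step: "round_step m n s (ops, a) = Some s'" using s' by (simp add: round_step_eq_Some)
  show ?case
  proof (cases "snd s' \<le> k")
    case True
    then have "x = y \<or> x \<in> set (take (stage_one_rounds m n k s' h) h)"
      using Cons.prems(3) step by (auto simp: y)
    then show ?thesis
      using Cons.IH[OF h wf] s'(2) wf True by (auto simp: y mem_wf_def)
  qed (use Cons.prems(3) step in \<open>simp add: y\<close>)
qed simp

lemma stage_two_pulls_avoid:
  assumes "hist_state_from m n s h = Some e" "mem_wf n s" "snd s \<le> k" "i \<le> k"
    and "i \<notin> fst (last (filter (\<lambda>s. snd s \<le> k) (op_trace m n s (concat (map fst h)))))"
    and "x \<in> set (drop (stage_one_rounds m n k s h) h)"
  shows "fst (snd x) \<noteq> i"
  using assms
proof (induction h arbitrary: s)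
  case (Cons y h)
  obtain ops a b where y: "y = (ops, a, b)" by (cases y)
  obtain s' where s': "apply_ops m n s ops = Some s'" "a \<in> fst s'"
    and h: "hist_state_from m n s' h = Some e"
    using Cons.prems(1) unfolding y by (rule hist_state_from_Cons_SomeE)
  have wf: "mem_wf n s'" using apply_ops_mem_wf[OF s'(1) Cons.prems(2)] .
  have step: "round_step m n s (ops, a) = Some s'" using s' by (simp add: round_step_eq_Some)
  define tr where "tr = op_trace m n s' (concat (map fst h))"
  have trace: "op_trace m n s (concat (map fst (y # h))) = butlast (op_trace m n s ops) @ tr"
    using op_trace_append[OF s'(1)] by (simp add: y tr_def)
  have "s' \<in> set tr" unfolding tr_def by (rule in_op_trace)
  show ?case
  proof (cases "snd s' \<le> k")
    case True
    then have "filter (\<lambda>s. snd s \<le> k) tr \<noteq> []"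
      using \<open>s' \<in> set tr\<close> by (auto simp: filter_empty_conv)
    then have "i \<notin> fst (last (filter (\<lambda>s. snd s \<le> k) tr))"
      using Cons.prems(5) trace by simp
    moreover have "x \<in> set (drop (stage_one_rounds m n k s' h) h)"
      using Cons.prems(6) step True by (simp add: y)
    ultimately show ?thesis using Cons.IH[OF h wf True Cons.prems(4)] unfolding tr_def by blast
  next
    case False
    text \<open>Arm \<open>x\<close> is pulled from a memory state of stage two, from which \<open>i\<close> is absent.\<close>
    have "\<exists>q\<in>set tr. fst (snd x) \<in> fst q \<and> k < snd q"
    proof (cases "x = y")
      case True
      then show ?thesis using \<open>s' \<in> set tr\<close> s'(2) False by (auto simp: y)
    next
      case x_ne_y: False
      then have "x \<in> set h" using Cons.prems(6) step False by (simp add: y)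
      then obtain q where "q \<in> set tr" "fst (snd x) \<in> fst q"
        using pulled_arm_in_op_trace[OF h] unfolding tr_def by blast
      moreover have "snd s' \<le> snd q" using op_trace_reads_mono \<open>q \<in> set tr\<close> unfolding tr_def by blast
      ultimately show ?thesis using False by auto
    qed
    then obtain q where q: "q \<in> set tr" "fst (snd x) \<in> fst q" "k < snd q" by blast
    then have "q \<in> set (op_trace m n s (concat (map fst (y # h))))" using trace by simp
    then have "i \<notin> fst q" using op_trace_stage_two_mem Cons.prems(3,4,5) q(3) by blast
    then show ?thesis using q(2) by auto
  qed
qed simp

lemma sum_pulls_ge_stage_one:
  fixes g :: "nat \<Rightarrow> real"
  assumes "hist_state_from m n s h = Some e" "mem_wf n s"
    and "\<And>j. j \<in> {1..n} \<Longrightarrow> 0 \<le> g j" "\<And>j. j \<in> {1..k} \<Longrightarrow> c \<le> g j"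
  shows "c * real (stage_one_rounds m n k s h) \<le> (\<Sum>x\<leftarrow>h. g (fst (snd x)))"
proof -
  let ?L = "stage_one_rounds m n k s h"
  have "c * real (length (take ?L h)) \<le> (\<Sum>x\<leftarrow>take ?L h. g (fst (snd x)))"
    using stage_one_pulls[OF assms(1,2)] assms(4) by (intro sum_list_ge_length_mult) blast
  moreover have "0 * real (length (drop ?L h)) \<le> (\<Sum>x\<leftarrow>drop ?L h. g (fst (snd x)))"
    using pulled_arm_range[OF assms(1,2)] assms(3) by (intro sum_list_ge_length_mult) (blast dest: in_set_dropD)
  moreover note sum_list_take_drop[of "\<lambda>x. g (fst (snd x))" h ?L]
  ultimately show ?thesis
    using stage_one_rounds_le[of m n k s h] by (simp add: min_absorb1)
qed

lemma sum_pulls_ge_stage_two: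
  fixes g :: "nat \<Rightarrow> real"
  assumes "hist_state_from m n s h = Some e" "mem_wf n s" "snd s \<le> k" "i \<le> k"
    and "i \<notin> fst (last (filter (\<lambda>s. snd s \<le> k) (op_trace m n s (concat (map fst h)))))"
    and "\<And>j. j \<in> {1..n} \<Longrightarrow> 0 \<le> g j" "\<And>j. j \<in> {1..n} \<Longrightarrow> j \<noteq> i \<Longrightarrow> \<epsilon> \<le> g j"
  shows "\<epsilon> * (real (length h) - real (stage_one_rounds m n k s h)) \<le> (\<Sum>x\<leftarrow>h. g (fst (snd x)))"
proof -
  let ?L = "stage_one_rounds m n k s h"
  have "0 * real (length (take ?L h)) \<le> (\<Sum>x\<leftarrow>take ?L h. g (fst (snd x)))"
    using pulled_arm_range[OF assms(1,2)] assms(6) by (intro sum_list_ge_length_mult) (blast dest: in_set_takeD)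
  moreover have "\<epsilon> * real (length (drop ?L h)) \<le> (\<Sum>x\<leftarrow>drop ?L h. g (fst (snd x)))"
    using stage_two_pulls_avoid[OF assms(1-5)] pulled_arm_range[OF assms(1,2)] assms(7)
    by (intro sum_list_ge_length_mult) (blast dest: in_set_dropD)
  moreover note sum_list_take_drop[of "\<lambda>x. g (fst (snd x))" h ?L]
  ultimately show ?thesis
    using stage_one_rounds_le[of m n k s h] by (simp add: of_nat_diff)
qed

section \<open>Regret lower bounds\<close>

lemma run_support:
  assumes "valid_alg m n \<pi>" "h \<in> set_pmf (run \<pi> mu t)"
  shows "length h = t \<and> (\<exists>e. hist_state m n h = Some e)"
  using assms(2)
proof (induction t arbitrary: h)
  case (Suc t)
  then obtain h0 act b where h0: "h0 \<in> set_pmf (run \<pi> mu t)" and act: "act \<in> set_pmf (\<pi> h0)"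
    and h: "h = h0 @ [(fst act, snd act, b)]" by auto
  obtain e where e: "hist_state m n h0 = Some e" and "length h0 = t" using Suc.IH[OF h0] by blast
  moreover have "round_step m n e act \<noteq> None" using assms(1) e act unfolding valid_alg_def by blast
  ultimately show ?case
    using hist_state_from_snoc[of m n init_state h0 "fst act" "snd act" b]
    by (auto simp: h hist_state_def split: option.splits)
qed (simp add: hist_state_def)

lemma best_mean_ge: "j \<in> {1..n} \<Longrightarrow> mu j \<le> best_mean n mu"
  unfolding best_mean_def by (rule Max_ge) auto

lemma integrable_pmf_bounded:
  fixes f :: "'a \<Rightarrow> real"
  assumes "\<And>x. x \<in> set_pmf p \<Longrightarrow> \<bar>f x\<bar> \<le> B"
  shows "integrable (measure_pmf p) f"
  by (rule measure_pmf.integrable_const_bound[where B=B]) (auto simp: AE_measure_pmf_iff assms)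

lemma integrable_regret:
  assumes "valid_alg m n \<pi>"
  shows "integrable (measure_pmf (run \<pi> mu T)) (\<lambda>h. \<Sum>x\<leftarrow>h. best_mean n mu - mu (fst (snd x)))"
proof (rule integrable_pmf_bounded)
  define B where "B = (\<Sum>j\<in>{1..n}. \<bar>best_mean n mu - mu j\<bar>)"
  fix h assume h: "h \<in> set_pmf (run \<pi> mu T)"
  then obtain e where e: "hist_state_from m n init_state h = Some e" and "length h = T"
    using run_support[OF assms] unfolding hist_state_def by blast
  have "\<bar>best_mean n mu - mu (fst (snd x))\<bar> \<le> B" if "x \<in> set h" for x
    using pulled_arm_range[OF e mem_wf_init_state that] unfolding B_def
    by (intro member_le_sum) auto
  then have "(\<Sum>x\<leftarrow>h. \<bar>best_mean n mu - mu (fst (snd x))\<bar>) \<le> (\<Sum>x\<leftarrow>h. B)"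
    by (rule sum_list_mono)
  then show "\<bar>\<Sum>x\<leftarrow>h. best_mean n mu - mu (fst (snd x))\<bar> \<le> real T * B"
    using sum_list_abs[of "map (\<lambda>x. best_mean n mu - mu (fst (snd x))) h"] \<open>length h = T\<close>
    by (simp add: sum_list_triv o_def)
qed

lemma integrable_stage_one_rounds:
  assumes "valid_alg m n \<pi>"
  shows "integrable (measure_pmf (run \<pi> mu T)) (\<lambda>h. real (stage_one_rounds m n k init_state h))"
proof (rule integrable_pmf_bounded)
  fix h assume "h \<in> set_pmf (run \<pi> mu T)"
  then show "\<bar>real (stage_one_rounds m n k init_state h)\<bar> \<le> real T"
    using run_support[OF assms] stage_one_rounds_le[of m n k init_state h] by simp
qed

lemma regret_ge_stage_one:
  assumes "valid_alg m n \<pi>" "\<And>j. j \<in> {1..k} \<Longrightarrow> c \<le> best_mean n mu - mu j"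
  shows "c * measure_pmf.expectation (run \<pi> mu T) (\<lambda>h. real (stage_one_rounds m n k init_state h))
         \<le> exp_regret \<pi> n mu T"
proof -
  let ?p = "run \<pi> mu T"
  have "measure_pmf.expectation ?p (\<lambda>h. c * real (stage_one_rounds m n k init_state h))
      \<le> measure_pmf.expectation ?p (\<lambda>h. \<Sum>x\<leftarrow>h. best_mean n mu - mu (fst (snd x)))"
  proof (rule integral_mono_AE)
    show "AE h in measure_pmf ?p. c * real (stage_one_rounds m n k init_state h)
        \<le> (\<Sum>x\<leftarrow>h. best_mean n mu - mu (fst (snd x)))"
    proof (rule AE_pmfI)
      fix h assume "h \<in> set_pmf ?p"
      then obtain e where "hist_state_from m n init_state h = Some e"
        using run_support[OF assms(1)] unfolding hist_state_def by blast
      then show "c * real (stage_one_rounds m n k init_state h) \<le> (\<Sum>x\<leftarrow>h. best_mean n mu - mu (fst (snd x)))"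
        using best_mean_ge assms(2) by (intro sum_pulls_ge_stage_one[OF _ mem_wf_init_state]) auto
    qed
  qed (use integrable_stage_one_rounds[OF assms(1)] integrable_regret[OF assms(1)] in simp_all)
  then show ?thesis by (simp add: exp_regret_def)
qed

lemma regret_sum_ge_tau:
  assumes "hist_state m n h = Some e" "i \<le> k" "0 \<le> \<epsilon>"
    and "\<And>j. j \<in> {1..n} \<Longrightarrow> j \<noteq> i \<Longrightarrow> \<epsilon> \<le> best_mean n mu - mu j"
  shows "\<epsilon> * (real (length h) * indicator (tau_event m n k i) h - real (stage_one_rounds m n k init_state h))
         \<le> (\<Sum>x\<leftarrow>h. best_mean n mu - mu (fst (snd x)))"
proof (cases "h \<in> tau_event m n k i")
  case True
  have start: "snd init_state \<le> k" by (simp add: init_state_def)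
  have "i \<notin> fst (last (filter (\<lambda>s. snd s \<le> k) (op_trace m n init_state (concat (map fst h)))))"
    using True by (simp add: tau_event_def stage2_mem_def)
  from sum_pulls_ge_stage_two[OF assms(1)[unfolded hist_state_def] mem_wf_init_state start assms(2) this,
      of "\<lambda>j. best_mean n mu - mu j"]
  show ?thesis using True best_mean_ge assms(4) by auto
next
  case False
  have "0 * real (length h) \<le> (\<Sum>x\<leftarrow>h. best_mean n mu - mu (fst (snd x)))"
    using pulled_arm_range[OF assms(1)[unfolded hist_state_def] mem_wf_init_state] best_mean_ge
    by (intro sum_list_ge_length_mult) auto
  with False assms(3) show ?thesis by (simp add: order_trans[of _ 0])
qed

lemma regret_ge_tau:
  assumes "valid_alg m n \<pi>" "i \<le> k" "0 \<le> \<epsilon>"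
    and "\<And>j. j \<in> {1..n} \<Longrightarrow> j \<noteq> i \<Longrightarrow> \<epsilon> \<le> best_mean n mu - mu j"
  shows "\<epsilon> * (real T * measure_pmf.prob (run \<pi> mu T) (tau_event m n k i)
            - measure_pmf.expectation (run \<pi> mu T) (\<lambda>h. real (stage_one_rounds m n k init_state h)))
         \<le> exp_regret \<pi> n mu T"
proof -
  let ?p = "run \<pi> mu T"
  let ?L = "\<lambda>h. real (stage_one_rounds m n k init_state h)"
  let ?I = "\<lambda>h. indicator (tau_event m n k i) h :: real"
  have int_I: "integrable (measure_pmf ?p) ?I"
    by (rule integrable_pmf_bounded[where B=1]) (simp add: indicator_def)
  note int_L = integrable_stage_one_rounds[OF assms(1)]
  have "measure_pmf.expectation ?p (\<lambda>h. \<epsilon> * (real T * ?I h - ?L h))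
      \<le> measure_pmf.expectation ?p (\<lambda>h. \<Sum>x\<leftarrow>h. best_mean n mu - mu (fst (snd x)))"
  proof (rule integral_mono_AE)
    show "AE h in measure_pmf ?p. \<epsilon> * (real T * ?I h - ?L h) \<le> (\<Sum>x\<leftarrow>h. best_mean n mu - mu (fst (snd x)))"
      using run_support[OF assms(1)] regret_sum_ge_tau[OF _ assms(2-4)] by (intro AE_pmfI) metis
  qed (use int_I int_L integrable_regret[OF assms(1)] in simp_all)
  then show ?thesis
    using int_I int_L by (simp add: exp_regret_def integral_diff)
qed

section \<open>Coupling of stage one\<close>

definition stage_one_prefix :: "nat \<Rightarrow> nat \<Rightarrow> nat \<Rightarrow> history \<Rightarrow> history" where
  "stage_one_prefix m n k h = take (stage_one_rounds m n k init_state h) h"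

lemma length_stage_one_prefix: "length (stage_one_prefix m n k h) = stage_one_rounds m n k init_state h"
  using stage_one_rounds_le[of m n k init_state h] by (simp add: stage_one_prefix_def)

definition round_pmf :: "policy \<Rightarrow> (nat \<Rightarrow> real) \<Rightarrow> history \<Rightarrow> history pmf" where
  "round_pmf \<pi> mu h =
     bind_pmf (\<pi> h) (\<lambda>act.
       bind_pmf (bernoulli_pmf (mu (snd act))) (\<lambda>b. return_pmf (h @ [(fst act, snd act, b)])))"

lemma run_Suc_round_pmf: "run \<pi> mu (Suc t) = bind_pmf (run \<pi> mu t) (round_pmf \<pi> mu)"
  unfolding round_pmf_def[abs_def] by simp

lemma stage_one_prefix_snoc:
  assumes "hist_state m n h = Some e"
  shows "stage_one_prefix m n k (h @ [(ops, a, b)]) =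
     (if stage_one_rounds m n k init_state h = length h then
        (case round_step m n e (ops, a) of
           None \<Rightarrow> h
         | Some s' \<Rightarrow> if snd s' \<le> k then h @ [(ops, a, b)] else h)
      else stage_one_prefix m n k h)"
  using stage_one_rounds_snoc[of m n init_state h e k ops a b] assms stage_one_rounds_le[of m n k init_state h]
  by (auto simp: stage_one_prefix_def hist_state_def split: option.splits)

lemma stage_one_prefix_round_pmf_stage_two:
  assumes "hist_state m n h = Some e" "stage_one_rounds m n k init_state h \<noteq> length h"
  shows "map_pmf (stage_one_prefix m n k) (round_pmf \<pi> mu h) = return_pmf (stage_one_prefix m n k h)"
proof -
  have "stage_one_prefix m n k (h @ [(ops, a, b)]) = stage_one_prefix m n k h" for ops a b
    using stage_one_prefix_snoc[OF assms(1)] assms(2) by presburger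
  then show ?thesis by (simp add: round_pmf_def map_bind_pmf bind_pmf_const)
qed

text \<open>While a history is still in stage one, the next round pulls an arm among \<open>1..k\<close>, or
  else it leaves stage one and its reward is cut off by the prefix; either way only the means
  of the first \<open>k\<close> arms matter.\<close>

lemma stage_one_prefix_round_pmf_stage_one:
  assumes "valid_alg m n \<pi>" "hist_state m n h = Some e"
    and "stage_one_rounds m n k init_state h = length h"
    and "\<And>j. j \<le> k \<Longrightarrow> mu j = mu' j"
  shows "map_pmf (stage_one_prefix m n k) (round_pmf \<pi> mu h)
       = map_pmf (stage_one_prefix m n k) (round_pmf \<pi> mu' h)"
proof -
  have "map_pmf (stage_one_prefix m n k)
          (bind_pmf (bernoulli_pmf (mu (snd act))) (\<lambda>b. return_pmf (h @ [(fst act, snd act, b)]))) =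
        map_pmf (stage_one_prefix m n k)
          (bind_pmf (bernoulli_pmf (mu' (snd act))) (\<lambda>b. return_pmf (h @ [(fst act, snd act, b)])))"
    if "act \<in> set_pmf (\<pi> h)" for act
  proof -
    obtain ops a where act: "act = (ops, a)" by (cases act)
    have "round_step m n e act \<noteq> None" using assms(1,2) that unfolding valid_alg_def by blast
    then obtain s' where step: "round_step m n e (ops, a) = Some s'" by (auto simp: act)
    then have s': "apply_ops m n e ops = Some s'" "a \<in> fst s'" by (simp_all add: round_step_eq_Some)
    show ?thesis
    proof (cases "snd s' \<le> k")
      case True
      have "mem_wf n e"
        using hist_state_from_mem_wf assms(2) mem_wf_init_state unfolding hist_state_def by blast
      then have "mem_wf n s'" by (rule apply_ops_mem_wf[OF s'(1)])
      then have "a \<le> k" using s'(2) True by (auto simp: mem_wf_def)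
      then show ?thesis using assms(4) by (simp add: act)
    next
      case False
      have "stage_one_prefix m n k (h @ [(ops, a, b)]) = h" for b
        using stage_one_prefix_snoc[OF assms(2), of k ops a b] assms(3) step False by simp
      then show ?thesis by (simp add: act map_bind_pmf bind_pmf_const)
    qed
  qed
  then show ?thesis
    unfolding round_pmf_def map_bind_pmf by (rule bind_pmf_cong[OF refl])
qed

lemma stage_one_prefix_law:
  assumes "valid_alg m n \<pi>" "\<And>j. j \<le> k \<Longrightarrow> mu j = mu' j"
  shows "map_pmf (stage_one_prefix m n k) (run \<pi> mu t) = map_pmf (stage_one_prefix m n k) (run \<pi> mu' t)"
proof (induction t)
  case (Suc t)
  let ?P = "stage_one_prefix m n k"
  text \<open>A prefix shorter than \<open>t\<close> has left stage one and stays fixed; one of length \<open>t\<close> is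
    a full history still in stage one and is extended by a round.\<close>
  define K where "K = (\<lambda>\<mu> g. if length g < t then return_pmf g else map_pmf ?P (round_pmf \<pi> \<mu> g))"
  have factor: "map_pmf ?P (run \<pi> \<mu> (Suc t)) = bind_pmf (map_pmf ?P (run \<pi> \<mu> t)) (K \<mu>)" for \<mu>
  proof -
    have "map_pmf ?P (round_pmf \<pi> \<mu> h) = K \<mu> (?P h)" if h: "h \<in> set_pmf (run \<pi> \<mu> t)" for h
    proof -
      obtain e where e: "hist_state m n h = Some e" and "length h = t"
        using run_support[OF assms(1) h] by blast
      then show ?thesis
        using stage_one_prefix_round_pmf_stage_two[OF e] stage_one_rounds_le[of m n k init_state h]
        by (cases "stage_one_rounds m n k init_state h = length h")
          (simp_all add: K_def stage_one_prefix_def length_stage_one_prefix)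
    qed
    then show ?thesis
      unfolding run_Suc_round_pmf map_bind_pmf bind_map_pmf by (intro bind_pmf_cong) auto
  qed
  have K_agree: "K mu g = K mu' g" if "g \<in> set_pmf (map_pmf ?P (run \<pi> mu' t))" for g
  proof (cases "length g < t")
    case False
    from that obtain h where h: "h \<in> set_pmf (run \<pi> mu' t)" and g: "g = ?P h" by auto
    obtain e where e: "hist_state m n h = Some e" and "length h = t"
      using run_support[OF assms(1) h] by blast
    then have "stage_one_rounds m n k init_state h = length h"
      using False g length_stage_one_prefix[of m n k h] stage_one_rounds_le[of m n k init_state h] by simp
    moreover from this have "g = h" using g by (simp add: stage_one_prefix_def)
    ultimately show ?thesis
      using stage_one_prefix_round_pmf_stage_one[OF assms(1) e _ assms(2)] False by (simp add: K_def)
  qed (simp add: K_def)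
  show ?case
    unfolding factor Suc.IH by (rule bind_pmf_cong[OF refl K_agree])
qed simp

lemma expected_stage_one_rounds_eq:
  assumes "valid_alg m n \<pi>" "\<And>j. j \<le> k \<Longrightarrow> mu j = mu' j"
  shows "measure_pmf.expectation (run \<pi> mu T) (\<lambda>h. real (stage_one_rounds m n k init_state h))
       = measure_pmf.expectation (run \<pi> mu' T) (\<lambda>h. real (stage_one_rounds m n k init_state h))"
  using arg_cong[OF stage_one_prefix_law[OF assms],
      of _ _ "\<lambda>p. measure_pmf.expectation p (\<lambda>g. real (length g))"]
  by (simp add: length_stage_one_prefix)

lemma prob_tau_le_regrets:
  assumes "valid_alg m n \<pi>" "i \<le> k" "0 < \<epsilon>" "0 < c"
    and "\<And>j. j \<le> k \<Longrightarrow> mu j = mu' j"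
    and "\<And>j. j \<in> {1..n} \<Longrightarrow> j \<noteq> i \<Longrightarrow> \<epsilon> \<le> best_mean n mu - mu j"
    and "\<And>j. j \<in> {1..k} \<Longrightarrow> c \<le> best_mean n mu' - mu' j"
  shows "real T * measure_pmf.prob (run \<pi> mu T) (tau_event m n k i)
       \<le> exp_regret \<pi> n mu T / \<epsilon> + exp_regret \<pi> n mu' T / c"
proof -
  define L where "L = measure_pmf.expectation (run \<pi> mu T) (\<lambda>h. real (stage_one_rounds m n k init_state h))"
  have "\<epsilon> * (real T * measure_pmf.prob (run \<pi> mu T) (tau_event m n k i) - L) \<le> exp_regret \<pi> n mu T"
    unfolding L_def using assms(1,2) less_imp_le[OF assms(3)] assms(6) by (rule regret_ge_tau)
  moreover have "L = measure_pmf.expectation (run \<pi> mu' T) (\<lambda>h. real (stage_one_rounds m n k init_state h))"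
    unfolding L_def by (rule expected_stage_one_rounds_eq[OF assms(1,5)])
  then have "c * L \<le> exp_regret \<pi> n mu' T"
    using regret_ge_stage_one[OF assms(1,7)] by simp
  ultimately have "real T * measure_pmf.prob (run \<pi> mu T) (tau_event m n k i) - L \<le> exp_regret \<pi> n mu T / \<epsilon>"
    and "L \<le> exp_regret \<pi> n mu' T / c"
    using assms(3,4) by (simp_all add: pos_le_divide_eq mult.commute)
  then show ?thesis by linarith
qed

lemma nu_inst_le_best:
  assumes "i \<in> {1..k}" "k < n" "j \<noteq> i" "0 \<le> eps \<alpha> k T"
  shows "nu_inst \<alpha> k n T i j + eps \<alpha> k T \<le> nu_inst \<alpha> k n T i i"
proof -
  have "eps \<alpha> k T \<le> real n * eps \<alpha> k T"
    using assms(2,4) mult_right_mono[of 1 "real n" "eps \<alpha> k T"] by simp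
  then show ?thesis using assms by (auto simp: nu_inst_def algebra_simps)
qed

lemma best_mean_nu_inst:
  assumes "i \<in> {1..k}" "k < n" "0 \<le> eps \<alpha> k T"
  shows "best_mean n (nu_inst \<alpha> k n T i) = nu_inst \<alpha> k n T i i"
  unfolding best_mean_def
proof (rule Max_eqI)
  fix y assume "y \<in> nu_inst \<alpha> k n T i ` {1..n}"
  then show "y \<le> nu_inst \<alpha> k n T i i"
    using nu_inst_le_best[OF assms(1,2) _ assms(3)] assms(3) by (cases "y = nu_inst \<alpha> k n T i i") force+
qed (use assms in auto)

lemma best_mean_nu_inst':
  assumes "i \<in> {1..k}" "k < n" "0 \<le> eps \<alpha> k T" "(real n + 1) * eps \<alpha> k T \<le> 1/2"
  shows "best_mean n (nu_inst' \<alpha> k n T i) = 1"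
  unfolding best_mean_def
proof (rule Max_eqI)
  show "1 \<in> nu_inst' \<alpha> k n T i ` {1..n}"
    using assms(2) by (force simp: nu_inst'_def)
  fix y assume "y \<in> nu_inst' \<alpha> k n T i ` {1..n}"
  then show "y \<le> 1"
    using assms by (auto simp: nu_inst'_def nu_inst_def algebra_simps)
qed auto

lemma nu_inst'_stage_one_gap:
  assumes "i \<in> {1..k}" "k < n" "j \<in> {1..k}" "0 \<le> eps \<alpha> k T" "(real n + 1) * eps \<alpha> k T \<le> 1/4"
  shows "1/4 \<le> best_mean n (nu_inst' \<alpha> k n T i) - nu_inst' \<alpha> k n T i j"
  using assms best_mean_nu_inst'[OF assms(1,2,4)] by (auto simp: nu_inst'_def nu_inst_def algebra_simps)

section \<open>Size of \<open>\<epsilon>\<close> and the (SR) bounds\<close>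

lemma eps_pos: "0 < k \<Longrightarrow> 0 < T \<Longrightarrow> 0 < eps \<alpha> k T"
  by (simp add: eps_def)

lemma eps_tendsto_zero:
  assumes "-1 < \<alpha>"
  shows "(\<lambda>T. eps \<alpha> k T) \<longlonglongrightarrow> 0"
proof -
  have "(\<lambda>T. (real k / real T) powr (1 / (2 + 2 * \<alpha>))) \<longlonglongrightarrow> 0"
    using assms by (intro tendsto_zero_powrI lim_const_over_n) auto
  then show ?thesis
    unfolding eps_def by (rule tendsto_mult_right_zero)
qed

lemma eventually_eps_small:
  assumes "-1 < \<alpha>" "0 < c"
  shows "eventually (\<lambda>T. eps \<alpha> k T \<le> c) sequentially"
  by (rule eventually_mono[OF order_tendstoD(2)[OF eps_tendsto_zero[OF assms(1), of k] assms(2)]]) simp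

lemma SR_regret_bound_eq:
  assumes "-1 < \<alpha>" "0 < k" "0 < T"
  shows "f_km \<alpha> k m * real T powr (1 / (\<alpha> + 1)) * eps \<alpha> k T powr (1 - 2 * \<alpha>)
       = 1/8 * ((real k - real m + 1) / real k) * eps \<alpha> k T * real T"
proof -
  define x where "x = real k / real T"
  define a where "a = 1 / (2 + 2 * \<alpha>)"
  define b where "b = 1 / (\<alpha> + 1)"
  have x: "0 < x" using assms by (simp add: x_def)
  have eps: "eps \<alpha> k T = x powr a / 4" by (simp add: eps_def x_def a_def)
  have "\<alpha> + 1 \<noteq> 0" "2 + 2 * \<alpha> \<noteq> 0" using assms(1) by auto
  then have "b = 2 * a" "a * (2 + 2 * \<alpha>) = 1" by (simp_all add: a_def b_def field_simps)
  then have "a * (1 - 2 * \<alpha>) = a + b - 1" by (simp add: algebra_simps)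
  then have "x powr (a * (1 - 2 * \<alpha>)) = x powr a * x powr b / x"
    using x by (simp add: powr_add powr_diff)
  moreover have "eps \<alpha> k T powr (1 - 2 * \<alpha>) = x powr (a * (1 - 2 * \<alpha>)) / 4 powr (1 - 2 * \<alpha>)"
    using x unfolding eps by (simp add: powr_divide powr_powr)
  moreover have "(4::real) powr (1 - 2 * \<alpha>) = 4 / 4 powr (2 * \<alpha>)"
    by (simp add: powr_diff)
  ultimately have eps_pow: "eps \<alpha> k T powr (1 - 2 * \<alpha>) = x powr a * x powr b / x * 4 powr (2 * \<alpha>) / 4"
    by simp
  have "(4::real) powr (2 * \<alpha>) = (4 powr 2) powr \<alpha>" by (simp only: powr_powr)
  then have "(16::real) powr (\<alpha> + 1) = 4 powr (2 * \<alpha>) * 16" by (simp add: powr_add)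
  moreover have "real T powr b / real k powr b = 1 / x powr b"
    using assms by (simp add: x_def powr_divide)
  ultimately show ?thesis
    using x assms unfolding f_km_def eps_pow b_def[symmetric]
    by (simp add: eps x_def field_simps)
qed

lemma f_km_powr_le:
  assumes "0 \<le> \<alpha>" "0 < k" "k \<le> T" "m \<le> k + 1"
  shows "f_km \<alpha> k m * real T powr (1 / (\<alpha> + 1)) \<le> 1/8 * ((real k - real m + 1) / real k) * real T"
proof -
  define b where "b = 1 / (\<alpha> + 1)"
  define Q where "Q = real k - real m + 1"
  have Q: "0 \<le> Q" using assms(4) by (simp add: Q_def)
  have "real T powr b / real k powr b = (real T / real k) powr b"
    using assms by (simp add: powr_divide)
  also have "\<dots> \<le> (real T / real k) powr 1"
    using assms by (intro powr_mono) (auto simp: b_def)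
  finally have ratio: "real T powr b / real k powr b \<le> real T / real k" using assms by simp
  have "(16::real) powr 1 \<le> 16 powr (\<alpha> + 1)" using assms(1) by (intro powr_mono) auto
  then have "2 / 16 powr (\<alpha> + 1) \<le> (1/8::real)" by (simp add: field_simps)
  then have "f_km \<alpha> k m * real T powr b = 2 / 16 powr (\<alpha> + 1) * Q * (real T powr b / real k powr b)"
    by (simp add: f_km_def Q_def b_def)
  also have "\<dots> \<le> 1/8 * Q * (real T / real k)"
    using ratio Q \<open>2 / 16 powr (\<alpha> + 1) \<le> 1/8\<close> by (intro mult_mono) auto
  finally show ?thesis by (simp add: Q_def b_def)
qed

lemma prob_tau_nu_inst_le_regrets:
  assumes "valid_alg m n \<pi>" "i \<in> {1..k}" "k < n"
    and "0 < eps \<alpha> k T" "(real n + 1) * eps \<alpha> k T \<le> 1/4"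
  shows "real T * measure_pmf.prob (run \<pi> (nu_inst \<alpha> k n T i) T) (tau_event m n k i)
       \<le> exp_regret \<pi> n (nu_inst \<alpha> k n T i) T / eps \<alpha> k T + 4 * exp_regret \<pi> n (nu_inst' \<alpha> k n T i) T"
proof -
  have eps: "0 \<le> eps \<alpha> k T" using assms(4) by simp
  have "real T * measure_pmf.prob (run \<pi> (nu_inst \<alpha> k n T i) T) (tau_event m n k i)
      \<le> exp_regret \<pi> n (nu_inst \<alpha> k n T i) T / eps \<alpha> k T + exp_regret \<pi> n (nu_inst' \<alpha> k n T i) T / (1/4)"
  proof (rule prob_tau_le_regrets)
    show "eps \<alpha> k T \<le> best_mean n (nu_inst \<alpha> k n T i) - nu_inst \<alpha> k n T i j" if "j \<noteq> i" for j
      using nu_inst_le_best[OF assms(2,3) that eps] best_mean_nu_inst[OF assms(2,3) eps] by simp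
    show "1/4 \<le> best_mean n (nu_inst' \<alpha> k n T i) - nu_inst' \<alpha> k n T i j" if "j \<in> {1..k}" for j
      using nu_inst'_stage_one_gap[OF assms(2,3) that eps assms(5)] .
  qed (use assms in \<open>auto simp: nu_inst'_def\<close>)
  then show ?thesis by simp
qed

lemma SR_regret_bounds:
  assumes "SR \<alpha> m k n T \<pi>" "i \<in> {1..k}" "0 \<le> \<alpha>" "0 < k" "k \<le> T" "m \<le> k"
  defines "Q \<equiv> (real k - real m + 1) / real k"
  shows "exp_regret \<pi> n (nu_inst \<alpha> k n T i) T / eps \<alpha> k T \<le> 1/8 * Q * real T"
    and "4 * exp_regret \<pi> n (nu_inst' \<alpha> k n T i) T \<le> 1/64 * Q * real T"
proof -
  have "0 < eps \<alpha> k T" using assms(4,5) by (simp add: eps_pos)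
  moreover have "exp_regret \<pi> n (nu_inst \<alpha> k n T i) T \<le> 1/8 * Q * eps \<alpha> k T * real T"
    using assms(1-5) SR_regret_bound_eq[of \<alpha> k T m] unfolding SR_def Q_def by auto
  ultimately show "exp_regret \<pi> n (nu_inst \<alpha> k n T i) T / eps \<alpha> k T \<le> 1/8 * Q * real T"
    by (simp add: pos_divide_le_eq algebra_simps)
  have "exp_regret \<pi> n (nu_inst' \<alpha> k n T i) T \<le> 1/32 * f_km \<alpha> k m * real T powr (1 / (\<alpha> + 1))"
    using assms(1,2) unfolding SR_def by auto
  also have "\<dots> \<le> 1/32 * (1/8 * Q * real T)"
    using f_km_powr_le[of \<alpha> k T m] assms(3-6) unfolding Q_def by linarith
  finally show "4 * exp_regret \<pi> n (nu_inst' \<alpha> k n T i) T \<le> 1/64 * Q * real T"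
    by simp
qed

theorem mainTheorem9:
  fixes \<alpha> :: real and m k n :: nat
  assumes "1 \<le> \<alpha>" and "2 \<le> m" and "m \<le> k" and "k < n"
  shows "\<exists>T0::nat. \<forall>T\<ge>T0. \<forall>\<pi>::policy.
           valid_alg m n \<pi> \<and> SR \<alpha> m k n T \<pi> \<longrightarrow>
           (\<forall>i\<in>{1..k}.
              measure_pmf.prob (run \<pi> (nu_inst \<alpha> k n T i) T) (tau_event m n k i)
                \<le> 1/2 * ((real k - real m + 1) / real k))"
proof -
  have "eventually (\<lambda>T. k \<le> T \<and> eps \<alpha> k T \<le> 1 / (4 * (real n + 1))) sequentially"
    using assms(1) by (intro eventually_conj eventually_ge_at_top eventually_eps_small) auto
  then obtain T0 where T0: "\<And>T. T0 \<le> T \<Longrightarrow> k \<le> T \<and> eps \<alpha> k T \<le> 1 / (4 * (real n + 1))"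
    unfolding eventually_sequentially by blast
  show ?thesis
  proof (intro exI[of _ T0] allI impI ballI)
    fix T \<pi> i
    assume "T0 \<le> T" and alg: "valid_alg m n \<pi> \<and> SR \<alpha> m k n T \<pi>" and i: "i \<in> {1..k}"
    define Q where "Q = (real k - real m + 1) / real k"
    have "0 < k" "k \<le> T" using assms T0[OF \<open>T0 \<le> T\<close>] by auto
    then have "0 < eps \<alpha> k T" "(real n + 1) * eps \<alpha> k T \<le> 1/4"
      using T0[OF \<open>T0 \<le> T\<close>] by (auto simp: eps_pos field_simps)
    then have "real T * measure_pmf.prob (run \<pi> (nu_inst \<alpha> k n T i) T) (tau_event m n k i)
        \<le> exp_regret \<pi> n (nu_inst \<alpha> k n T i) T / eps \<alpha> k T + 4 * exp_regret \<pi> n (nu_inst' \<alpha> k n T i) T"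
      using alg i assms(4) by (intro prob_tau_nu_inst_le_regrets) auto
    also have "\<dots> \<le> 1/8 * Q * real T + 1/64 * Q * real T"
      using SR_regret_bounds[of \<alpha> m k n T \<pi> i] alg i assms \<open>0 < k\<close> \<open>k \<le> T\<close>
      unfolding Q_def by (intro add_mono) auto
    also have "\<dots> \<le> real T * (1/2 * Q)"
    proof -
      have "0 \<le> Q * real T" using assms(3) by (simp add: Q_def)
      then show ?thesis by (simp add: algebra_simps)
    qed
    finally show "measure_pmf.prob (run \<pi> (nu_inst \<alpha> k n T i) T) (tau_event m n k i) \<le> 1/2 * Q"
      using \<open>0 < k\<close> \<open>k \<le> T\<close> by (subst (asm) mult_le_cancel_left_pos) auto
  qed
qed

end
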